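(* For every positive integer $n$, every real $t\in[0,n)$ and every $p\in[0,1]$, if $B\sim\mathrm{Binom}(n,p)$ then \[ \mathbb{E}\Big[\exp\Big(t\cdot D\big((B/n,1-B/n)\,\|\,(p,1-p)\big)\Big)\Big]\leq\frac{1}{1-t/n}. \]
   Context: $D\big((q,1-q)\,\|\,(p,1-p)\big)=q\log\frac{q}{p}+(1-q)\log\frac{1-q}{1-p}$ is the Kullback--Leibler divergence between Bernoulli distributions (natural logarithm, convention $0\log(0/p)=0$). *)

theory Defs
  imports "HOL-Probability.Probability"
begin

definition xlogxy :: "real \<Rightarrow> real \<Rightarrow> real" where
  "xlogxy q p = (if q = 0 then 0 else q * ln (q / p))"

definition kl_bern :: "real \<Rightarrow> real \<Rightarrow> real" where
  "kl_bern q p = xlogxy q p + xlogxy (1 - q) (1 - p)"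

end

theory Submission
  imports Defs
begin

(* Put s = t/n and q = k/n. The k-th term of the expectation is
   C(n,k) (p (q/p)^s)^k ((1-p) ((1-q)/(1-p))^s)^(n-k), and weighted AM-GM bounds it by
   C(n,k) x_k^k (1 - x_k)^(n-k) with x_k = (1-s) p + k s/n, which is affine in k.
   Abel's identity evaluates the sum of these bounds exactly as
   sum_m C(n,m) m! (s/n)^m, and C(n,m) m! <= n^m makes this at most sum_m s^m <= 1/(1-s). *)

lemma alternating_binomial_sum_Suc:
  fixes f :: "nat \<Rightarrow> 'a::comm_ring_1"
  shows "(\<Sum>k\<le>Suc m. of_nat (Suc m choose k) * (-1)^k * f k) =
         - (\<Sum>k\<le>m. of_nat (m choose k) * (-1)^k * (f (Suc k) - f k))"
proof -
  have tail: "f 0 - (\<Sum>k\<le>m. of_nat (m choose Suc k) * (-1)^k * f (Suc k))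
           = (\<Sum>k\<le>m. of_nat (m choose k) * (-1)^k * f k)"
    using sum.atMost_Suc_shift[of "\<lambda>k. of_nat (m choose k) * (-1)^k * f k" m]
    by (simp add: binomial_eq_0 sum_negf)
  have "(\<Sum>k\<le>Suc m. of_nat (Suc m choose k) * (-1)^k * f k) =
        (f 0 - (\<Sum>k\<le>m. of_nat (m choose Suc k) * (-1)^k * f (Suc k)))
          - (\<Sum>k\<le>m. of_nat (m choose k) * (-1)^k * f (Suc k))"
    unfolding sum.atMost_Suc_shift binomial_Suc_Suc of_nat_add
    by (simp add: algebra_simps sum.distrib sum_subtractf sum_negf)
  also have "\<dots> = - (\<Sum>k\<le>m. of_nat (m choose k) * (-1)^k * (f (Suc k) - f k))"
    unfolding tail by (simp add: sum_subtractf algebra_simps)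
  finally show ?thesis .
qed

lemma alternating_binomial_sum_power:
  fixes x z :: "'a::{comm_ring_1,ring_char_0}"
  assumes "j \<le> m"
  shows "(\<Sum>k\<le>m. of_nat (m choose k) * (-1)^k * (x + of_nat k * z)^j) =
           (if j = m then (-1)^m * fact m * z^m else 0)"
  using assms
proof (induction m arbitrary: j)
  case 0
  then show ?case by simp
next
  case (Suc m)
  have step: "(x + of_nat (Suc k) * z)^j - (x + of_nat k * z)^j =
       (\<Sum>i<j. of_nat (j choose i) * z^(j-i) * (x + of_nat k * z)^i)" for k
  proof -
    have "(x + of_nat (Suc k) * z)^j = ((x + of_nat k * z) + z)^j" by (simp add: algebra_simps)
    also have "\<dots> = (\<Sum>i\<le>j. of_nat (j choose i) * (x + of_nat k * z)^i * z^(j-i))"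
      by (rule binomial_ring)
    also have "\<dots> = (\<Sum>i<j. of_nat (j choose i) * z^(j-i) * (x + of_nat k * z)^i)
                      + (x + of_nat k * z)^j"
      by (simp add: lessThan_Suc_atMost[symmetric] algebra_simps)
    finally show ?thesis by simp
  qed
  have "(\<Sum>k\<le>Suc m. of_nat (Suc m choose k) * (-1)^k * (x + of_nat k * z)^j)
      = - (\<Sum>k\<le>m. of_nat (m choose k) * (-1)^k *
              (\<Sum>i<j. of_nat (j choose i) * z^(j-i) * (x + of_nat k * z)^i))"
    by (simp only: alternating_binomial_sum_Suc step)
  also have "\<dots> = - (\<Sum>i<j. of_nat (j choose i) * z^(j-i) *
                        (\<Sum>k\<le>m. of_nat (m choose k) * (-1)^k * (x + of_nat k * z)^i))"
    by (simp add: sum_distrib_left sum_distrib_right algebra_simps sum.swap[of _ "{..<j}"])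
  also have "\<dots> = - (\<Sum>i<j. of_nat (j choose i) * z^(j-i) *
                        (if i = m then (-1)^m * fact m * z^m else 0))"
    using Suc by (intro arg_cong[where f=uminus] sum.cong) auto
  also have "\<dots> = (if j = Suc m then (-1)^(Suc m) * fact (Suc m) * z^(Suc m) else 0)"
    using Suc.prems by (auto simp: le_Suc_eq lessThan_Suc algebra_simps intro!: sum.neutral)
  finally show ?case .
qed

lemma abel_binomial_identity:
  fixes x z u :: "'a::{comm_ring_1,ring_char_0}"
  shows "(\<Sum>k\<le>n. of_nat (n choose k) * (x + of_nat k * z)^k * (u - (x + of_nat k * z))^(n-k))
         = (\<Sum>m\<le>n. of_nat (n choose m) * fact m * z^m * u^(n-m))"
proof -
  define G where "G k i = of_nat (n choose k) * of_nat ((n-k) choose i) * (-1)^i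
                            * (x + of_nat k * z)^(k+i) * u^(n-k-i)" for k i
  have expand: "of_nat (n choose k) * w^k * (u - w)^(n-k)
      = (\<Sum>i\<le>n-k. of_nat (n choose k) * of_nat ((n-k) choose i) * (-1)^i
                      * w^(k+i) * u^(n-k-i))"
    for k and w :: 'a
  proof -
    have "(u - w)^(n-k) = (\<Sum>i\<le>n-k. of_nat ((n-k) choose i) * (-w)^i * u^(n-k-i))"
      unfolding binomial_ring[symmetric] by simp
    then show ?thesis
      by (simp add: sum_distrib_left power_minus[of w] power_add mult_ac)
  qed
  txt \<open>Collecting the terms of total degree m = k + i, the coefficient of u^(n-m) is an
    m-th finite difference of the degree-m polynomial k \<mapsto> (x + k z)^m.\<close>
  have regroup: "(\<Sum>k\<le>m. G k (m-k)) = of_nat (n choose m) * u^(n-m) * (-1)^m *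
                    (\<Sum>k\<le>m. of_nat (m choose k) * (-1)^k * (x + of_nat k * z)^m)"
    if "m \<le> n" for m
    unfolding sum_distrib_left
  proof (intro sum.cong refl)
    fix k assume "k \<in> {..m}"
    then have "k \<le> m" by simp
    then have exps: "k + (m - k) = m" "n - k - (m - k) = n - m" using \<open>m \<le> n\<close> by auto
    have "G k (m-k) = (of_nat (n choose k) * of_nat ((n-k) choose (m-k)))
                        * ((-1)^(m-k) * (x + of_nat k * z)^m * u^(n-m))"
      unfolding G_def exps by (simp only: mult.assoc)
    also have "\<dots> = (of_nat (n choose m) * of_nat (m choose k))
                        * ((-1)^m * (-1)^k * (x + of_nat k * z)^m * u^(n-m))"
      using choose_mult[of k m n] \<open>k \<le> m\<close> \<open>m \<le> n\<close>
      by (simp flip: of_nat_mult neg_one_power_add_eq_neg_one_power_diff power_add)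
    finally show "G k (m-k) = of_nat (n choose m) * u^(n-m) * (-1)^m *
                    (of_nat (m choose k) * (-1)^k * (x + of_nat k * z)^m)"
      by (simp add: mult_ac)
  qed
  have "(\<Sum>k\<le>n. of_nat (n choose k) * (x + of_nat k * z)^k * (u - (x + of_nat k * z))^(n-k))
      = (\<Sum>k\<le>n. \<Sum>i\<le>n-k. G k i)"
    by (simp only: expand G_def)
  also have "\<dots> = (\<Sum>(k,i)\<in>{(k,i). k+i \<le> n}. G k i)"
    by (simp add: pairs_le_eq_Sigma sum.Sigma)
  also have "\<dots> = (\<Sum>m\<le>n. \<Sum>k\<le>m. G k (m-k))"
    by (rule sum.triangle_reindex_eq)
  also have "\<dots> = (\<Sum>m\<le>n. of_nat (n choose m) * u^(n-m) * (-1)^m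
                        * ((-1)^m * fact m * z^m))"
    by (intro sum.cong refl) (simp add: regroup alternating_binomial_sum_power)
  also have "\<dots> = (\<Sum>m\<le>n. of_nat (n choose m) * fact m * z^m * u^(n-m))"
    by (simp add: mult_ac flip: power_add)
  finally show ?thesis .
qed

lemma weighted_am_gm_exp_ln:
  fixes a b s :: real
  assumes "0 < a" "0 < b" "0 \<le> s" "s \<le> 1"
  shows "a * exp (s * ln (b / a)) \<le> (1 - s) * a + s * b"
proof -
  have "a * exp (s * ln (b / a)) = exp (ln a + s * (ln b - ln a))"
    using assms by (simp add: exp_add ln_div)
  also have "\<dots> = a powr (1 - s) * b powr s"
    using assms by (simp add: powr_def algebra_simps flip: exp_add)
  also have "\<dots> \<le> (1 - s) * a + s * b"
    using Youngs_inequality_0[of "1 - s" s a b] assms by simp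
  finally show ?thesis .
qed

lemma sum_choose_fact_power_le:
  fixes s :: real
  assumes "0 \<le> s" "s < 1"
  shows "(\<Sum>m\<le>n. real (n choose m) * fact m * (s / real n)^m) \<le> 1 / (1 - s)"
proof -
  have "real (n choose m) * fact m * (s / real n)^m \<le> s^m" for m
  proof -
    have "real (n choose m) * fact m \<le> real n ^ m"
      using binomial_fact_pow[of n m]
      by (metis of_nat_fact of_nat_le_iff of_nat_mult of_nat_power)
    then have "real (n choose m) * fact m * (s / real n)^m \<le> real n ^ m * (s / real n)^m"
      using assms by (intro mult_right_mono) auto
    also have "\<dots> = (real n * (s / real n))^m"
      by (simp only: power_mult_distrib)
    also have "\<dots> \<le> s^m"
      using assms by (intro power_mono) auto
    finally show ?thesis .
  qed
  then have "(\<Sum>m\<le>n. real (n choose m) * fact m * (s / real n)^m) \<le> (\<Sum>m<Suc n. s^m)"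
    by (simp add: lessThan_Suc_atMost sum_mono)
  also have "\<dots> = (1 - s^Suc n) / (1 - s)"
    using assms by (simp only: sum_gp_strict) simp
  also have "\<dots> \<le> 1 / (1 - s)"
    using assms by (intro divide_right_mono) auto
  finally show ?thesis .
qed

lemma power_mult_exp_xlogxy_le:
  fixes p s :: real and k n :: nat
  assumes "0 \<le> p" "0 \<le> s" "s \<le> 1" "n > 0"
  shows "p^k * exp (s * real n * xlogxy (real k / real n) p)
           \<le> ((1 - s) * p + real k * (s / real n))^k"
proof (cases "k = 0")
  case True
  then show ?thesis by (simp add: xlogxy_def)
next
  case False
  define q where "q = real k / real n"
  have "q > 0"
    using False \<open>n > 0\<close> by (simp add: q_def)
  have "s * real n * xlogxy q p = real k * (s * ln (q / p))"
    using \<open>q > 0\<close> \<open>n > 0\<close> by (simp add: xlogxy_def q_def)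
  then have "p^k * exp (s * real n * xlogxy q p) = (p * exp (s * ln (q / p)))^k"
    by (simp only: exp_of_nat_mult power_mult_distrib)
  also have "\<dots> \<le> ((1 - s) * p + s * q)^k"
  proof (rule power_mono)
    \<comment> \<open>for p = 0 the junk value ln (q / 0) is multiplied by 0\<close>
    show "p * exp (s * ln (q / p)) \<le> (1 - s) * p + s * q"
      using weighted_am_gm_exp_ln[of p q s] assms \<open>q > 0\<close> by (cases "p = 0") auto
  qed (use \<open>0 \<le> p\<close> in simp)
  finally show ?thesis
    by (simp add: q_def algebra_simps)
qed

lemma power_mult_exp_kl_bern_le:
  fixes p s :: real and k n :: nat
  assumes "0 \<le> p" "p \<le> 1" "0 \<le> s" "s \<le> 1" "k \<le> n"
  defines "x \<equiv> (1 - s) * p + real k * (s / real n)"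
  shows "p^k * (1 - p)^(n - k) * exp (s * real n * kl_bern (real k / real n) p)
           \<le> x^k * (1 - x)^(n - k)"
proof (cases "n = 0")
  case True
  then show ?thesis using assms by (simp add: kl_bern_def xlogxy_def)
next
  case False
  have compl: "1 - real k / real n = real (n - k) / real n"
    using False \<open>k \<le> n\<close> by (simp add: of_nat_diff field_simps)
  have "1 - x = (1 - s) * (1 - p) + real (n - k) * (s / real n)"
    using False \<open>k \<le> n\<close> by (simp add: x_def of_nat_diff field_simps)
  then have compl_le: "(1 - p)^(n - k) * exp (s * real n * xlogxy (1 - real k / real n) (1 - p))
                         \<le> (1 - x)^(n - k)"
    unfolding compl using power_mult_exp_xlogxy_le[of "1 - p" s n "n - k"] assms False by simp
  have "p^k * (1 - p)^(n - k) * exp (s * real n * kl_bern (real k / real n) p)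
      = (p^k * exp (s * real n * xlogxy (real k / real n) p))
          * ((1 - p)^(n - k) * exp (s * real n * xlogxy (1 - real k / real n) (1 - p)))"
    by (simp add: kl_bern_def distrib_left exp_add mult_ac)
  also have "\<dots> \<le> x^k * (1 - x)^(n - k)"
  proof (rule mult_mono)
    show "p^k * exp (s * real n * xlogxy (real k / real n) p) \<le> x^k"
      unfolding x_def using power_mult_exp_xlogxy_le[of p s n k] assms False by simp
  qed (use compl_le assms in \<open>simp_all add: x_def\<close>)
  finally show ?thesis .
qed

theorem proposition2p5:
  fixes n :: nat and t p :: real
  assumes "n > 0" and "0 \<le> t" and "t < real n" and "0 \<le> p" and "p \<le> 1"
  shows "measure_pmf.expectation (binomial_pmf n p)
           (\<lambda>B. exp (t * kl_bern (real B / real n) p)) \<le> 1 / (1 - t / real n)"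
proof -
  define s where "s = t / real n"
  have "0 \<le> s" "s < 1" "t = s * real n"
    using assms by (simp_all add: s_def field_simps)
  have "measure_pmf.expectation (binomial_pmf n p)
          (\<lambda>B. exp (t * kl_bern (real B / real n) p))
      = (\<Sum>k\<le>n. real (n choose k) *
            (p^k * (1 - p)^(n - k) * exp (s * real n * kl_bern (real k / real n) p)))"
    using assms \<open>t = s * real n\<close> by (simp add: expectation_binomial_pmf' mult_ac)
  also have "\<dots> \<le> (\<Sum>k\<le>n. real (n choose k) * (((1 - s) * p + real k * (s / real n))^k
                            * (1 - ((1 - s) * p + real k * (s / real n)))^(n - k)))"
    using assms \<open>0 \<le> s\<close> \<open>s < 1\<close>
    by (intro sum_mono mult_left_mono power_mult_exp_kl_bern_le) auto
  also have "\<dots> = (\<Sum>m\<le>n. real (n choose m) * fact m * (s / real n)^m)"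
    using abel_binomial_identity[of n "(1 - s) * p" "s / real n" 1]
    by (simp add: mult.assoc)
  also have "\<dots> \<le> 1 / (1 - s)"
    using \<open>0 \<le> s\<close> \<open>s < 1\<close> by (rule sum_choose_fact_power_le)
  finally show ?thesis
    by (simp add: s_def)
qed

end
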